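(* Let $f:T\to T'$ be a homomorphism of pre-trusses. (1) For all $z\in\operatorname{im}f$, $f^{-1}(z)$ is a paragon in $T$. Moreover, if $P'$ is a paragon in the pre-truss $\operatorname{im}f$, then $f^{-1}(P')$ is a paragon in $T$. (2) If $P$ is a paragon in $T$, then $f(P)$ is a paragon in $\operatorname{im}f$.
   Context: A heap is a set with a ternary operation $[-,-,-]$ satisfying $[a_1,a_2,[a_3,a_4,a_5]]=[[a_1,a_2,a_3],a_4,a_5]$ and $[a,a,b]=b=[b,a,a]$. A pre-truss is a heap with an associative binary operation; a homomorphism of pre-trusses preserves both the ternary operation and the multiplication; its image is a pre-truss. A normal sub-heap is a non-empty subset $S$ closed under $[-,-,-]$ with $[[a,e,s],a,e]\in S$ for all $a$ and $e,s\in S$; $a\sim_S b$ iff $[a,b,s]\in S$ for some (equivalently all) $s\in S$. A sub-heap $S$ is closed if $[ts',ts,s]\in S$ and $[s't,st,s]\in S$ for all $s,s'\in S$ and $t$ in the pre-truss. A paragon is a non-empty normal sub-heap $P$ such that every equivalence class of $\sim_P$ is a closed sub-heap. *)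

theory Defs
  imports Main
begin

definition heap :: "'a set \<Rightarrow> ('a \<Rightarrow> 'a \<Rightarrow> 'a \<Rightarrow> 'a) \<Rightarrow> bool" where
  "heap H t \<longleftrightarrow>
     (\<forall>a\<in>H. \<forall>b\<in>H. \<forall>c\<in>H. t a b c \<in> H) \<and>
     (\<forall>a1\<in>H. \<forall>a2\<in>H. \<forall>a3\<in>H. \<forall>a4\<in>H. \<forall>a5\<in>H.
        t a1 a2 (t a3 a4 a5) = t (t a1 a2 a3) a4 a5) \<and>
     (\<forall>a\<in>H. \<forall>b\<in>H. t a a b = b \<and> t b a a = b)"

definition pretruss :: "'a set \<Rightarrow> ('a \<Rightarrow> 'a \<Rightarrow> 'a \<Rightarrow> 'a) \<Rightarrow> ('a \<Rightarrow> 'a \<Rightarrow> 'a) \<Rightarrow> bool" where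
  "pretruss T t m \<longleftrightarrow> heap T t \<and>
     (\<forall>a\<in>T. \<forall>b\<in>T. m a b \<in> T) \<and>
     (\<forall>a\<in>T. \<forall>b\<in>T. \<forall>c\<in>T. m (m a b) c = m a (m b c))"

definition pretruss_hom ::
  "'a set \<Rightarrow> ('a \<Rightarrow> 'a \<Rightarrow> 'a \<Rightarrow> 'a) \<Rightarrow> ('a \<Rightarrow> 'a \<Rightarrow> 'a) \<Rightarrow>
   'b set \<Rightarrow> ('b \<Rightarrow> 'b \<Rightarrow> 'b \<Rightarrow> 'b) \<Rightarrow> ('b \<Rightarrow> 'b \<Rightarrow> 'b) \<Rightarrow> ('a \<Rightarrow> 'b) \<Rightarrow> bool" where
  "pretruss_hom T t m T' t' m' f \<longleftrightarrow> pretruss T t m \<and> pretruss T' t' m' \<and>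
     (\<forall>a\<in>T. f a \<in> T') \<and>
     (\<forall>a\<in>T. \<forall>b\<in>T. \<forall>c\<in>T. f (t a b c) = t' (f a) (f b) (f c)) \<and>
     (\<forall>a\<in>T. \<forall>b\<in>T. f (m a b) = m' (f a) (f b))"

definition subheap :: "'a set \<Rightarrow> ('a \<Rightarrow> 'a \<Rightarrow> 'a \<Rightarrow> 'a) \<Rightarrow> 'a set \<Rightarrow> bool" where
  "subheap H t S \<longleftrightarrow> S \<subseteq> H \<and> (\<forall>a\<in>S. \<forall>b\<in>S. \<forall>c\<in>S. t a b c \<in> S)"

definition normal_subheap :: "'a set \<Rightarrow> ('a \<Rightarrow> 'a \<Rightarrow> 'a \<Rightarrow> 'a) \<Rightarrow> 'a set \<Rightarrow> bool" where
  "normal_subheap H t S \<longleftrightarrow> S \<noteq> {} \<and> subheap H t S \<and>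
     (\<forall>a\<in>H. \<forall>e\<in>S. \<forall>s\<in>S. t (t a e s) a e \<in> S)"

definition heap_sim :: "'a set \<Rightarrow> ('a \<Rightarrow> 'a \<Rightarrow> 'a \<Rightarrow> 'a) \<Rightarrow> 'a set \<Rightarrow> 'a \<Rightarrow> 'a \<Rightarrow> bool" where
  "heap_sim H t S a b \<longleftrightarrow> a \<in> H \<and> b \<in> H \<and> (\<exists>s\<in>S. t a b s \<in> S)"

definition sim_class :: "'a set \<Rightarrow> ('a \<Rightarrow> 'a \<Rightarrow> 'a \<Rightarrow> 'a) \<Rightarrow> 'a set \<Rightarrow> 'a \<Rightarrow> 'a set" where
  "sim_class H t S a = {b. heap_sim H t S a b}"

definition closed_subheap ::
  "'a set \<Rightarrow> ('a \<Rightarrow> 'a \<Rightarrow> 'a \<Rightarrow> 'a) \<Rightarrow> ('a \<Rightarrow> 'a \<Rightarrow> 'a) \<Rightarrow> 'a set \<Rightarrow> bool" where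
  "closed_subheap T t m S \<longleftrightarrow> subheap T t S \<and>
     (\<forall>s\<in>S. \<forall>s'\<in>S. \<forall>x\<in>T. t (m x s') (m x s) s \<in> S \<and> t (m s' x) (m s x) s \<in> S)"

definition paragon ::
  "'a set \<Rightarrow> ('a \<Rightarrow> 'a \<Rightarrow> 'a \<Rightarrow> 'a) \<Rightarrow> ('a \<Rightarrow> 'a \<Rightarrow> 'a) \<Rightarrow> 'a set \<Rightarrow> bool" where
  "paragon T t m P \<longleftrightarrow> normal_subheap T t P \<and>
     (\<forall>a\<in>T. closed_subheap T t m (sim_class T t P a))"

end

theory Submission
  imports Defs
begin

text \<open>Normality and closedness of sub-heaps are defined by closure conditions, so they pull back
along \<open>f\<close>; the \<open>\<sim>\<close>-classes of \<open>f\<^sup>-\<^sup>1(P')\<close> are the preimages of the classes of \<open>P'\<close>, and a fibre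
\<open>f\<^sup>-\<^sup>1(z)\<close> is the preimage of the singleton \<open>{z}\<close>, which is a paragon of the pre-truss \<open>im f\<close>.
Pushing forward, \<open>f(P)\<close> is normal in \<open>im f\<close> and its classes are the images of the classes of
\<open>P\<close>. The only non-formal point is the inclusion of a class of \<open>f(P)\<close> in the image of a class
of \<open>P\<close>: if \<open>[f a, f b, f s] = f p\<close> with \<open>s, p \<in> P\<close>, then \<open>b' = [s, p, a]\<close> satisfies
\<open>f b' = f b\<close> and \<open>[a, b', s] = p\<close>, both instances of the heap identity \<open>[c, [a, b, c], a] = b\<close>.\<close>

lemma heap_closed: "heap H t \<Longrightarrow> a \<in> H \<Longrightarrow> b \<in> H \<Longrightarrow> c \<in> H \<Longrightarrow> t a b c \<in> H"
  unfolding heap_def by blast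

lemma heap_assoc:
  "heap H t \<Longrightarrow> a \<in> H \<Longrightarrow> b \<in> H \<Longrightarrow> c \<in> H \<Longrightarrow> d \<in> H \<Longrightarrow> e \<in> H \<Longrightarrow>
    t a b (t c d e) = t (t a b c) d e"
  unfolding heap_def by blast

lemma heap_cancel_left: "heap H t \<Longrightarrow> a \<in> H \<Longrightarrow> b \<in> H \<Longrightarrow> t a a b = b"
  unfolding heap_def by blast

lemma heap_cancel_right: "heap H t \<Longrightarrow> a \<in> H \<Longrightarrow> b \<in> H \<Longrightarrow> t b a a = b"
  unfolding heap_def by blast

lemma heap_inner_swap:
  assumes h: "heap H t" and H: "a \<in> H" "b \<in> H" "c \<in> H" "d \<in> H" "e \<in> H"
  shows "t a (t b c d) e = t (t a d c) b e"
proof -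
  note heap = heap_closed[OF h] heap_assoc[OF h] heap_cancel_left[OF h] heap_cancel_right[OF h]
  define u where "u = t b c d"
  have u: "u \<in> H" using H by (simp add: u_def heap)
  have "b = t u d c" using H by (simp add: u_def heap(2)[symmetric] heap)
  then have "t a d c = t a u b" using H u by (simp add: heap)
  then have "t (t a d c) b e = t a u (t b b e)" using H u by (simp add: heap(2))
  also have "\<dots> = t a u e" using H by (simp add: heap)
  finally show ?thesis by (simp add: u_def)
qed

lemma heap_inner_cancel:
  "heap H t \<Longrightarrow> a \<in> H \<Longrightarrow> b \<in> H \<Longrightarrow> c \<in> H \<Longrightarrow> t c (t a b c) a = b"
  by (simp add: heap_inner_swap heap_cancel_left heap_cancel_right)

lemma pretruss_subset:
  assumes "pretruss T t m" and "S \<subseteq> T"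
    and "\<forall>a\<in>S. \<forall>b\<in>S. \<forall>c\<in>S. t a b c \<in> S" and "\<forall>a\<in>S. \<forall>b\<in>S. m a b \<in> S"
  shows "pretruss S t m"
  using assms unfolding pretruss_def heap_def by (meson subsetD)

lemma sim_class_singleton:
  assumes h: "heap H t" and z: "z \<in> H"
  shows "sim_class H t {z} y \<subseteq> {y}"
proof
  fix c assume "c \<in> sim_class H t {z} y"
  then have y: "y \<in> H" and c: "c \<in> H" and yc: "t y c z = z"
    unfolding sim_class_def heap_sim_def by auto
  have "c = t z (t y c z) y" by (rule heap_inner_cancel[OF h y c z, symmetric])
  also have "\<dots> = y" using y z yc heap_cancel_left[OF h] by simp
  finally show "c \<in> {y}" by simp
qed

lemma paragon_singleton:
  assumes T: "pretruss T t m" and z: "z \<in> T"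
  shows "paragon T t m {z}"
proof -
  have h: "heap T t" using T unfolding pretruss_def by blast
  have m: "m a b \<in> T" if "a \<in> T" "b \<in> T" for a b using T that unfolding pretruss_def by blast
  have "normal_subheap T t {z}"
    unfolding normal_subheap_def subheap_def
    using z by (simp add: heap_cancel_left[OF h] heap_cancel_right[OF h])
  moreover have "closed_subheap T t m (sim_class T t {z} y)" for y
  proof -
    have "sim_class T t {z} y = {} \<or> sim_class T t {z} y = {y} \<and> y \<in> T"
      using sim_class_singleton[OF h z, of y] unfolding sim_class_def heap_sim_def by blast
    then show ?thesis
      unfolding closed_subheap_def subheap_def
      by (elim disjE conjE) (simp_all add: heap_cancel_left[OF h] m)
  qed
  ultimately show ?thesis unfolding paragon_def by blast
qed

locale pretruss_morphism =
  fixes T :: "'a set" and t :: "'a \<Rightarrow> 'a \<Rightarrow> 'a \<Rightarrow> 'a" and m :: "'a \<Rightarrow> 'a \<Rightarrow> 'a"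
    and T' :: "'b set" and t' :: "'b \<Rightarrow> 'b \<Rightarrow> 'b \<Rightarrow> 'b" and m' :: "'b \<Rightarrow> 'b \<Rightarrow> 'b"
    and f :: "'a \<Rightarrow> 'b"
  assumes hom: "pretruss_hom T t m T' t' m' f"
begin

lemma source_pretruss: "pretruss T t m"
  and target_pretruss: "pretruss T' t' m'"
  and map_closed: "a \<in> T \<Longrightarrow> f a \<in> T'"
  and map_ternary: "a \<in> T \<Longrightarrow> b \<in> T \<Longrightarrow> c \<in> T \<Longrightarrow> f (t a b c) = t' (f a) (f b) (f c)"
  and map_mult: "a \<in> T \<Longrightarrow> b \<in> T \<Longrightarrow> f (m a b) = m' (f a) (f b)"
  using hom unfolding pretruss_hom_def by blast+

lemma source_heap: "heap T t"
  and target_heap: "heap T' t'"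
  and mult_closed: "a \<in> T \<Longrightarrow> b \<in> T \<Longrightarrow> m a b \<in> T"
  using source_pretruss target_pretruss unfolding pretruss_def by blast+

lemmas ternary_closed = heap_closed[OF source_heap]

lemma image_pretruss: "pretruss (f ` T) t' m'"
  by (rule pretruss_subset[OF target_pretruss])
    (auto simp: map_closed ternary_closed mult_closed map_ternary[symmetric] map_mult[symmetric])

lemma normal_subheap_vimage:
  assumes "normal_subheap (f ` T) t' P'"
  shows "normal_subheap T t {x \<in> T. f x \<in> P'}"
  using assms unfolding normal_subheap_def subheap_def
  by (auto simp: ternary_closed map_ternary)

lemma closed_subheap_vimage:
  assumes "closed_subheap (f ` T) t' m' S"
  shows "closed_subheap T t m {x \<in> T. f x \<in> S}"
  using assms unfolding closed_subheap_def subheap_def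
  by (auto simp: ternary_closed mult_closed map_ternary map_mult)

lemma sim_class_vimage:
  assumes "P' \<subseteq> f ` T" and "a \<in> T"
  shows "sim_class T t {x \<in> T. f x \<in> P'} a = {b \<in> T. f b \<in> sim_class (f ` T) t' P' (f a)}"
  using assms unfolding sim_class_def heap_sim_def
  by (fastforce simp: ternary_closed map_ternary)

lemma paragon_vimage:
  assumes "paragon (f ` T) t' m' P'"
  shows "paragon T t m {x \<in> T. f x \<in> P'}"
proof -
  have "normal_subheap (f ` T) t' P'" and "P' \<subseteq> f ` T"
    using assms unfolding paragon_def normal_subheap_def subheap_def by auto
  moreover have "closed_subheap (f ` T) t' m' (sim_class (f ` T) t' P' (f a))" if "a \<in> T" for a
    using assms that unfolding paragon_def by auto
  ultimately show ?thesis
    unfolding paragon_def by (simp add: normal_subheap_vimage sim_class_vimage closed_subheap_vimage)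
qed

lemma subheap_image:
  assumes "subheap T t S"
  shows "subheap (f ` T) t' (f ` S)"
  unfolding subheap_def
proof (intro conjI ballI)
  have S: "S \<subseteq> T" "\<forall>a\<in>S. \<forall>b\<in>S. \<forall>c\<in>S. t a b c \<in> S"
    using assms unfolding subheap_def by blast+
  then show "f ` S \<subseteq> f ` T" by blast
  fix x y z assume "x \<in> f ` S" "y \<in> f ` S" "z \<in> f ` S"
  then obtain a b c where abc: "a \<in> S" "b \<in> S" "c \<in> S" and "x = f a" "y = f b" "z = f c"
    by blast
  moreover have "a \<in> T" "b \<in> T" "c \<in> T" using abc S(1) by blast+
  ultimately have "t' x y z = f (t a b c)" by (simp add: map_ternary)
  then show "t' x y z \<in> f ` S" using abc S(2) by simp
qed

lemma normal_subheap_image: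
  assumes "normal_subheap T t P"
  shows "normal_subheap (f ` T) t' (f ` P)"
  unfolding normal_subheap_def
proof (intro conjI ballI)
  have P: "subheap T t P" "P \<noteq> {}" "P \<subseteq> T" "\<forall>a\<in>T. \<forall>e\<in>P. \<forall>s\<in>P. t (t a e s) a e \<in> P"
    using assms unfolding normal_subheap_def subheap_def by blast+
  then show "f ` P \<noteq> {}" and "subheap (f ` T) t' (f ` P)" by (simp_all add: subheap_image)
  fix x y z assume "x \<in> f ` T" "y \<in> f ` P" "z \<in> f ` P"
  then obtain a e s where aes: "a \<in> T" "e \<in> P" "s \<in> P" and "x = f a" "y = f e" "z = f s"
    by blast
  moreover have "e \<in> T" "s \<in> T" using aes P(3) by blast+
  ultimately have "t' (t' x y z) x y = f (t (t a e s) a e)"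
    by (simp add: map_ternary ternary_closed)
  then show "t' (t' x y z) x y \<in> f ` P" using aes P(4) by simp
qed

lemma closed_subheap_image:
  assumes "closed_subheap T t m S"
  shows "closed_subheap (f ` T) t' m' (f ` S)"
  unfolding closed_subheap_def
proof (intro conjI ballI)
  have S: "subheap T t S" "S \<subseteq> T"
    "\<forall>s\<in>S. \<forall>s'\<in>S. \<forall>x\<in>T. t (m x s') (m x s) s \<in> S \<and> t (m s' x) (m s x) s \<in> S"
    using assms unfolding closed_subheap_def subheap_def by blast+
  then show "subheap (f ` T) t' (f ` S)" by (simp add: subheap_image)
  fix y y' x assume "y \<in> f ` S" "y' \<in> f ` S" "x \<in> f ` T"
  then obtain s s' a where ssa: "s \<in> S" "s' \<in> S" "a \<in> T" and "y = f s" "y' = f s'" "x = f a"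
    by blast
  moreover have "s \<in> T" "s' \<in> T" using ssa S(2) by blast+
  ultimately have "t' (m' x y') (m' x y) y = f (t (m a s') (m a s) s)"
    and "t' (m' y' x) (m' y x) y = f (t (m s' a) (m s a) s)"
    by (simp_all add: map_ternary map_mult mult_closed)
  then show "t' (m' x y') (m' x y) y \<in> f ` S" and "t' (m' y' x) (m' y x) y \<in> f ` S"
    using ssa S(3) by simp_all
qed

lemma sim_class_image:
  assumes P: "P \<subseteq> T" and a: "a \<in> T"
  shows "sim_class (f ` T) t' (f ` P) (f a) = f ` sim_class T t P a"
proof (intro equalityI subsetI)
  fix y assume "y \<in> sim_class (f ` T) t' (f ` P) (f a)"
  then obtain b s p where b: "b \<in> T" "y = f b" and sp: "s \<in> P" "p \<in> P"
    and eq: "t' (f a) (f b) (f s) = f p"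
    unfolding sim_class_def heap_sim_def by auto
  have s: "s \<in> T" and p: "p \<in> T" using sp P by blast+
  define b' where "b' = t s p a"
  have b': "b' \<in> T" using s p a by (simp add: b'_def ternary_closed)
  have "f b' = t' (f s) (t' (f a) (f b) (f s)) (f a)"
    using s p a eq by (simp add: b'_def map_ternary)
  also have "\<dots> = f b"
    by (rule heap_inner_cancel[OF target_heap]) (simp_all add: a b s map_closed)
  finally have "f b' = y" using b by simp
  moreover have "t a b' s = p" unfolding b'_def by (rule heap_inner_cancel[OF source_heap s p a])
  ultimately show "y \<in> f ` sim_class T t P a"
    using a b' sp unfolding sim_class_def heap_sim_def by auto
next
  fix y assume "y \<in> f ` sim_class T t P a"
  then obtain b s where b: "b \<in> T" "y = f b" and s: "s \<in> P" "t a b s \<in> P"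
    unfolding sim_class_def heap_sim_def by auto
  then have "t' (f a) y (f s) = f (t a b s)" using a P by (auto simp: map_ternary)
  then show "y \<in> sim_class (f ` T) t' (f ` P) (f a)"
    using a b s unfolding sim_class_def heap_sim_def by auto
qed

lemma paragon_image:
  assumes "paragon T t m P"
  shows "paragon (f ` T) t' m' (f ` P)"
proof -
  have P: "normal_subheap T t P" "P \<subseteq> T" "\<forall>a\<in>T. closed_subheap T t m (sim_class T t P a)"
    using assms unfolding paragon_def normal_subheap_def subheap_def by blast+
  have "closed_subheap (f ` T) t' m' (sim_class (f ` T) t' (f ` P) y)" for y
  proof (cases "y \<in> f ` T")
    case True
    then show ?thesis using P(2,3) by (auto simp: sim_class_image closed_subheap_image)
  next
    case False
    then have "sim_class (f ` T) t' (f ` P) y = {}" unfolding sim_class_def heap_sim_def by blast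
    then show ?thesis unfolding closed_subheap_def subheap_def by simp
  qed
  then show ?thesis using P(1) unfolding paragon_def by (simp add: normal_subheap_image)
qed

end

theorem lemma3p13:
  fixes T :: "'a set" and t :: "'a \<Rightarrow> 'a \<Rightarrow> 'a \<Rightarrow> 'a" and m :: "'a \<Rightarrow> 'a \<Rightarrow> 'a"
    and T' :: "'b set" and t' :: "'b \<Rightarrow> 'b \<Rightarrow> 'b \<Rightarrow> 'b" and m' :: "'b \<Rightarrow> 'b \<Rightarrow> 'b"
    and f :: "'a \<Rightarrow> 'b"
  assumes "pretruss_hom T t m T' t' m' f"
  shows "(\<forall>z\<in>f ` T. paragon T t m {x\<in>T. f x = z})
       \<and> (\<forall>P'. paragon (f ` T) t' m' P' \<longrightarrow> paragon T t m {x\<in>T. f x \<in> P'})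
       \<and> (\<forall>P. paragon T t m P \<longrightarrow> paragon (f ` T) t' m' (f ` P))"
proof -
  interpret pretruss_morphism T t m T' t' m' f by (rule pretruss_morphism.intro) fact
  have "paragon T t m {x \<in> T. f x = z}" if "z \<in> f ` T" for z
    using paragon_vimage[OF paragon_singleton[OF image_pretruss that]] by simp
  then show ?thesis by (simp add: paragon_vimage paragon_image)
qed

end
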